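(* Let $n\in\mathbb{N}$ and $1\leq p<\infty$. Then (1) for every $f\in S_n^p$, $\|f\|_{\infty}\leq\pi\|f\|_{S_1^p}\leq\pi^2\|f\|_{S_2^p}\leq\cdots\leq\pi^n\|f\|_{S_n^p}$; (2) $S_n^p\subset S_{n-1}^p\subset\cdots\subset S_1^p\subset H^\infty$.
   Context: $\mathbb{D}$ is the open unit disk, $H(\mathbb{D})$ the analytic functions on $\mathbb{D}$, $H^p$ the Hardy space on $\mathbb{D}$, $H^\infty$ the bounded analytic functions with $\|f\|_\infty=\sup_{z\in\mathbb{D}}|f(z)|$. For $k\in\mathbb{N}$, $S_k^p=\{f\in H(\mathbb{D}): f^{(k)}\in H^p\}$ with norm defined recursively by $\|f\|_{S_k^p}=|f(0)|+\|f'\|_{S_{k-1}^p}$, where $S_0^p=H^p$. *)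

theory Defs
  imports "HOL-Analysis.Analysis"
begin

definition hp_mean :: "real \<Rightarrow> (complex \<Rightarrow> complex) \<Rightarrow> real \<Rightarrow> real" where
  "hp_mean p f r =
     (1 / (2 * pi) * integral {0..2*pi} (\<lambda>t. cmod (f (of_real r * cis t)) powr p)) powr (1 / p)"

definition in_Hp :: "real \<Rightarrow> (complex \<Rightarrow> complex) \<Rightarrow> bool" where
  "in_Hp p f \<longleftrightarrow> f holomorphic_on ball 0 1 \<and> bdd_above (hp_mean p f ` {0<..<1})"

definition Hp_norm :: "real \<Rightarrow> (complex \<Rightarrow> complex) \<Rightarrow> real" where
  "Hp_norm p f = (SUP r\<in>{0<..<1}. hp_mean p f r)"

definition in_Hinf :: "(complex \<Rightarrow> complex) \<Rightarrow> bool" where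
  "in_Hinf f \<longleftrightarrow> f holomorphic_on ball 0 1 \<and> bounded (f ` ball 0 1)"

definition sup_norm :: "(complex \<Rightarrow> complex) \<Rightarrow> real" where
  "sup_norm f = (SUP z\<in>ball 0 1. cmod (f z))"

definition in_S :: "nat \<Rightarrow> real \<Rightarrow> (complex \<Rightarrow> complex) \<Rightarrow> bool" where
  "in_S k p f \<longleftrightarrow> f holomorphic_on ball 0 1 \<and> in_Hp p ((deriv ^^ k) f)"

fun S_norm :: "nat \<Rightarrow> real \<Rightarrow> (complex \<Rightarrow> complex) \<Rightarrow> real" where
  "S_norm 0 p f = Hp_norm p f"
| "S_norm (Suc k) p f = cmod (f 0) + S_norm k p (deriv f)"

end

theory Submission
  imports Defs "HOL-Complex_Analysis.Complex_Analysis"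
begin

text \<open>For |w| < r and \<zeta> = r e^(it) the kernels Ln (1 - w / \<zeta>) and Ln (1 - \<zeta> conj w / r^2)
  are complex conjugates. Integrated against f'(\<zeta>) d\<zeta> over the circle |\<zeta>| = r, the first gives
  -2\<pi>i (f w - f 0) (differentiate in w and apply the Cauchy formula) and the second gives 0
  (Cauchy's theorem). Their difference -2i Im Ln (1 - \<zeta> conj w / r^2) has modulus at most \<pi>
  because the argument has positive real part. Hence |f w - f 0| \<le> (r/2) \<integral> |f'(r e^(it))| dt,
  which is at most \<pi> M_p(r, f') by Hoelder, so sup |f| \<le> |f 0| + \<pi> \<parallel>f'\<parallel>_p \<le> \<pi> \<parallel>f\<parallel>_(S_1^p).
  Applied to the derivatives of f this gives the chain of norms and of inclusions.\<close>

lemma Re_pos_imp_not_nonpos_Reals: "0 < Re z \<Longrightarrow> z \<notin> \<real>\<^sub>\<le>\<^sub>0"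
  by (auto simp: complex_nonpos_Reals_iff)

lemma norm_Ln_cnj_diff_le_pi:
  assumes "0 < Re a"
  shows "norm (Ln (cnj a) - Ln a) \<le> pi"
proof -
  have "Ln (cnj a) - Ln a = - (complex_of_real (2 * Im (Ln a)) * \<i>)"
    by (simp add: complex_eq_iff flip: cnj_Ln[OF Re_pos_imp_not_nonpos_Reals[OF assms]])
  hence "norm (Ln (cnj a) - Ln a) = 2 * \<bar>Im (Ln a)\<bar>"
    by (simp add: norm_mult)
  with Re_Ln_pos_lt_imp[OF assms] show ?thesis by simp
qed

lemma circle_integral_Cauchy_kernel:
  fixes g :: "complex \<Rightarrow> complex"
  assumes g: "g holomorphic_on ball 0 R" and r: "0 < r" "r < R" and w: "norm w < r"
  shows "((\<lambda>t. g (of_real r * cis t) / (of_real r * cis t - w) * (of_real r * \<i> * cis t))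
           has_integral 2 * of_real pi * \<i> * g w) {0..2*pi}"
proof -
  have "g holomorphic_on cball 0 r" by (rule holomorphic_on_subset[OF g]) (use r in auto)
  from Cauchy_integral_circlepath_simple[OF this, of w] w
  have "((\<lambda>u. g u / (u - w)) has_contour_integral 2 * of_real pi * \<i> * g w) (part_circlepath 0 r 0 (2*pi))"
    by (simp add: circlepath_def)
  thus ?thesis
    by (subst (asm) has_contour_integral_part_circlepath_iff) (auto simp: mult.assoc)
qed

lemma has_field_derivative_circle_integral_Ln:
  fixes g :: "complex \<Rightarrow> complex"
  assumes g: "g holomorphic_on ball 0 R" and r: "0 < r" "r < R" and w: "w \<in> ball 0 r"
  shows "((\<lambda>w. integral {0..2*pi}
             (\<lambda>t. g (of_real r * cis t) * Ln (1 - w / (of_real r * cis t)) * (of_real r * \<i> * cis t)))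
          has_field_derivative - (2 * of_real pi * \<i> * g w)) (at w within ball 0 r)"
proof -
  define \<zeta> where "\<zeta> t = of_real r * cis t" for t
  define h where "h u = (\<lambda>t. g (\<zeta> t) * Ln (1 - u / \<zeta> t) * (of_real r * \<i> * cis t))" for u
  define h' where "h' u = (\<lambda>t. - (g (\<zeta> t) / (\<zeta> t - u) * (of_real r * \<i> * cis t)))" for u
  have norm_\<zeta>: "norm (\<zeta> t) = r" for t using r by (simp add: \<zeta>_def norm_mult)
  have \<zeta>_nz: "\<zeta> t \<noteq> 0" for t using norm_\<zeta>[of t] r by auto
  have cont_\<zeta>: "continuous_on A \<zeta>" for A unfolding \<zeta>_def by (intro continuous_intros)
  have cont_g\<zeta>: "continuous_on A (\<lambda>t. g (\<zeta> t))" for A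
    using holomorphic_on_imp_continuous_on[OF g] norm_\<zeta> r
    by (intro continuous_on_compose2[OF _ cont_\<zeta>]) auto
  have Re_pos: "0 < Re (1 - u / \<zeta> t)" if "u \<in> ball 0 r" for u t
  proof -
    have "norm (u / \<zeta> t) < 1" using that norm_\<zeta> r by (simp add: norm_divide)
    thus ?thesis using complex_Re_le_cmod[of "u / \<zeta> t"] by simp
  qed
  have \<zeta>_ne: "\<zeta> t - u \<noteq> 0" if "u \<in> ball 0 r" for u t using that norm_\<zeta> by auto
  have "((\<lambda>u. h u t) has_field_derivative h' u t) (at u within ball 0 r)" if "u \<in> ball 0 r" for u t
  proof -
    have "inverse (1 - u / \<zeta> t) * (- 1 / \<zeta> t) = - 1 / (\<zeta> t - u)"
      using \<zeta>_nz[of t] \<zeta>_ne[OF that, of t] by (simp add: field_simps)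
    with Re_pos_imp_not_nonpos_Reals[OF Re_pos[OF that]] \<zeta>_nz[of t] show ?thesis
      unfolding h_def h'_def by (auto intro!: derivative_eq_intros)
  qed
  moreover have "h u integrable_on cbox 0 (2*pi)" if "u \<in> ball 0 r" for u
    unfolding h_def using Re_pos[OF that]
    by (intro integrable_continuous continuous_intros cont_g\<zeta> cont_\<zeta>)
      (auto intro!: Re_pos_imp_not_nonpos_Reals simp: \<zeta>_nz)
  moreover have "continuous_on (ball 0 r \<times> cbox 0 (2*pi)) (\<lambda>(u, t). h' u t)"
    unfolding h'_def split_beta using \<zeta>_ne
    by (intro continuous_intros continuous_on_compose2[OF cont_g\<zeta>[of UNIV]]
          continuous_on_compose2[OF cont_\<zeta>[of UNIV]]) auto
  ultimately have "((\<lambda>u. integral (cbox 0 (2*pi)) (h u)) has_field_derivative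
                     integral (cbox 0 (2*pi)) (h' w)) (at w within ball 0 r)"
    using w by (intro leibniz_rule_field_derivative) auto
  moreover have "integral {0..2*pi} (h' w) = - (2 * of_real pi * \<i> * g w)"
    using has_integral_neg[OF circle_integral_Cauchy_kernel[OF g r(1,2)]] w
    by (intro integral_unique) (simp add: h'_def \<zeta>_def)
  ultimately show ?thesis by (simp add: h_def \<zeta>_def)
qed

lemma circle_integral_deriv_Ln_kernel:
  fixes f :: "complex \<Rightarrow> complex"
  assumes f: "f holomorphic_on ball 0 R" and r: "0 < r" "r < R" and w: "norm w < r"
  shows "integral {0..2*pi}
           (\<lambda>t. deriv f (of_real r * cis t) * Ln (1 - w / (of_real r * cis t)) * (of_real r * \<i> * cis t))
         = - (2 * of_real pi * \<i>) * (f w - f 0)"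
proof -
  define F where "F u = integral {0..2*pi}
    (\<lambda>t. deriv f (of_real r * cis t) * Ln (1 - u / (of_real r * cis t)) * (of_real r * \<i> * cis t))
    + 2 * of_real pi * \<i> * f u" for u
  have "(F has_field_derivative 0) (at u within ball 0 r)" if u: "u \<in> ball 0 r" for u
  proof -
    have "(f has_field_derivative deriv f u) (at u within ball 0 r)"
      using holomorphic_derivI[OF f open_ball, of u] u r by (auto intro: has_field_derivative_at_within)
    from DERIV_add[OF has_field_derivative_circle_integral_Ln[OF holomorphic_deriv[OF f open_ball] r u]
                      DERIV_cmult[OF this, of "2 * of_real pi * \<i>"]]
    show ?thesis unfolding F_def by simp
  qed
  then obtain c where "\<And>u. u \<in> ball 0 r \<Longrightarrow> F u = c"
    using has_field_derivative_zero_constant[of "ball 0 r" F] by auto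
  hence "F w = F 0" using w r by simp
  thus ?thesis by (simp add: F_def algebra_simps)
qed

lemma circle_integral_deriv_reflected_Ln_kernel:
  fixes f :: "complex \<Rightarrow> complex"
  assumes f: "f holomorphic_on ball 0 R" and r: "0 < r" "r < R" and w: "norm w < r"
  shows "integral {0..2*pi} (\<lambda>t. deriv f (of_real r * cis t)
           * Ln (1 - cnj w * (of_real r * cis t) / of_real (r\<^sup>2)) * (of_real r * \<i> * cis t)) = 0"
proof -
  define S where "S = ball 0 R \<inter> {z. w \<bullet> z < r\<^sup>2}"
  have f'_hol: "deriv f holomorphic_on S"
    by (rule holomorphic_on_subset[OF holomorphic_deriv[OF f open_ball]]) (auto simp: S_def)
  have "(\<lambda>z. deriv f z * Ln (1 - cnj w * z / of_real (r\<^sup>2))) holomorphic_on S"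
  proof (rule holomorphic_on_mult[OF f'_hol], intro holomorphic_intros)
    fix z assume "z \<in> S"
    hence "Re (cnj w * z) / r\<^sup>2 < 1" using r by (simp add: S_def inner_complex_def divide_less_eq)
    thus "1 - cnj w * z / of_real (r\<^sup>2) \<notin> \<real>\<^sub>\<le>\<^sub>0"
      by (intro Re_pos_imp_not_nonpos_Reals) simp
  qed (use r in auto)
  moreover have "path_image (circlepath 0 r) \<subseteq> S"
  proof
    fix z assume "z \<in> path_image (circlepath 0 r)"
    hence z: "norm z = r" using r by auto
    have "w \<bullet> z \<le> norm w * norm z" by (rule norm_cauchy_schwarz)
    also have "\<dots> < r\<^sup>2" using z w r by (simp add: power2_eq_square)
    finally show "z \<in> S" using z r by (simp add: S_def)
  qed
  moreover have "convex S" unfolding S_def by (intro convex_Int convex_ball convex_halfspace_lt)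
  ultimately have "((\<lambda>z. deriv f z * Ln (1 - cnj w * z / of_real (r\<^sup>2))) has_contour_integral 0)
                     (circlepath 0 r)"
    by (intro Cauchy_theorem_convex_simple) auto
  hence "((\<lambda>z. deriv f z * Ln (1 - cnj w * z / of_real (r\<^sup>2))) has_contour_integral 0)
                     (part_circlepath 0 r 0 (2*pi))"
    by (simp add: circlepath_def)
  thus ?thesis
    by (subst (asm) has_contour_integral_part_circlepath_iff) (auto simp: mult.assoc)
qed

lemma norm_diff_le_circle_integral_deriv:
  fixes f :: "complex \<Rightarrow> complex"
  assumes f: "f holomorphic_on ball 0 R" and r: "0 < r" "r < R" and w: "norm w < r"
  shows "norm (f w - f 0) \<le> r / 2 * integral {0..2*pi} (\<lambda>t. norm (deriv f (of_real r * cis t)))"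
proof -
  define \<zeta> where "\<zeta> t = of_real r * cis t" for t
  define a where "a t = 1 - cnj w * \<zeta> t / of_real (r\<^sup>2)" for t
  define kernel where "kernel L = (\<lambda>t. deriv f (\<zeta> t) * L t * (of_real r * \<i> * cis t))" for L
  have norm_\<zeta>: "norm (\<zeta> t) = r" for t using r by (simp add: \<zeta>_def norm_mult)
  have cont_\<zeta>: "continuous_on A \<zeta>" for A unfolding \<zeta>_def by (intro continuous_intros)
  have cont_f'\<zeta>: "continuous_on A (\<lambda>t. deriv f (\<zeta> t))" for A
    using holomorphic_on_imp_continuous_on[OF holomorphic_deriv[OF f open_ball]] norm_\<zeta> r
    by (intro continuous_on_compose2[OF _ cont_\<zeta>]) auto
  have Re_a: "0 < Re (a t)" for t
  proof -
    have "norm (cnj w * \<zeta> t / of_real (r\<^sup>2)) < 1"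
      using r w norm_\<zeta>[of t] by (simp add: norm_mult norm_divide norm_power power2_eq_square)
    thus ?thesis using complex_Re_le_cmod[of "cnj w * \<zeta> t / of_real (r\<^sup>2)"] by (simp add: a_def)
  qed
  have cnj_a: "1 - w / \<zeta> t = cnj (a t)" for t
  proof -
    have "\<zeta> t * cnj (\<zeta> t) = of_real (r\<^sup>2)" using norm_\<zeta>[of t] by (simp add: complex_norm_square[symmetric])
    moreover have "\<zeta> t \<noteq> 0" using norm_\<zeta>[of t] r by auto
    ultimately have "w / \<zeta> t = w * cnj (\<zeta> t) / of_real (r\<^sup>2)" using r by (simp add: field_simps)
    thus ?thesis by (simp add: a_def)
  qed
  have int_kernel: "kernel (\<lambda>t. Ln (L t)) integrable_on {0..2*pi}"
    if "continuous_on UNIV L" "\<And>t. 0 < Re (L t)" for L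
    unfolding kernel_def using that
    by (intro integrable_continuous_interval continuous_intros cont_f'\<zeta>)
      (auto intro!: Re_pos_imp_not_nonpos_Reals continuous_on_subset[OF that(1)])
  have cont_a: "continuous_on UNIV a" unfolding a_def using r by (intro continuous_intros cont_\<zeta>) auto
  have "integral {0..2*pi} (kernel (\<lambda>t. Ln (cnj (a t)))) = - (2 * of_real pi * \<i>) * (f w - f 0)"
    using circle_integral_deriv_Ln_kernel[OF f r w] by (simp add: kernel_def \<zeta>_def flip: cnj_a)
  moreover have "integral {0..2*pi} (kernel (\<lambda>t. Ln (a t))) = 0"
    using circle_integral_deriv_reflected_Ln_kernel[OF f r w] by (simp add: kernel_def \<zeta>_def a_def)
  ultimately have "2 * pi * norm (f w - f 0) =
      norm (integral {0..2*pi} (\<lambda>t. kernel (\<lambda>t. Ln (cnj (a t))) t - kernel (\<lambda>t. Ln (a t)) t))"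
    using int_kernel[of "\<lambda>t. cnj (a t)"] int_kernel[of a] cont_a Re_a
    by (simp add: integral_diff norm_mult)
  also have "\<dots> \<le> integral {0..2*pi} (\<lambda>t. pi * r * norm (deriv f (\<zeta> t)))"
  proof (rule integral_norm_bound_integral)
    show "(\<lambda>t. kernel (\<lambda>t. Ln (cnj (a t))) t - kernel (\<lambda>t. Ln (a t)) t) integrable_on {0..2*pi}"
      using int_kernel[of "\<lambda>t. cnj (a t)"] int_kernel[of a] cont_a Re_a
      by (intro integrable_diff) (auto intro: continuous_on_cnj)
    show "(\<lambda>t. pi * r * norm (deriv f (\<zeta> t))) integrable_on {0..2*pi}"
      by (intro integrable_continuous_interval continuous_intros cont_f'\<zeta>)
    fix t
    have "norm (kernel (\<lambda>t. Ln (cnj (a t))) t - kernel (\<lambda>t. Ln (a t)) t)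
          = norm (deriv f (\<zeta> t)) * norm (Ln (cnj (a t)) - Ln (a t)) * r"
      using r by (simp add: kernel_def norm_mult flip: left_diff_distrib right_diff_distrib)
    also have "\<dots> \<le> norm (deriv f (\<zeta> t)) * pi * r"
      using norm_Ln_cnj_diff_le_pi[OF Re_a] r by (intro mult_mono) auto
    finally show "norm (kernel (\<lambda>t. Ln (cnj (a t))) t - kernel (\<lambda>t. Ln (a t)) t)
                  \<le> pi * r * norm (deriv f (\<zeta> t))" by (simp add: mult_ac)
  qed
  finally show ?thesis by (simp add: \<zeta>_def field_simps)
qed

lemma integral_mean_le_powr_mean:
  fixes u :: "real \<Rightarrow> real"
  assumes ab: "a < b" and u: "continuous_on {a..b} u" "\<And>t. t \<in> {a..b} \<Longrightarrow> 0 \<le> u t" and p: "1 \<le> p"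
  shows "1 / (b - a) * integral {a..b} u \<le> (1 / (b - a) * integral {a..b} (\<lambda>t. u t powr p)) powr (1 / p)"
proof (cases "p = 1")
  case True
  have "0 \<le> integral {a..b} u"
    by (rule integral_nonneg[OF integrable_continuous_interval[OF u(1)]]) (use u in auto)
  moreover have "integral {a..b} (\<lambda>t. u t powr p) = integral {a..b} u"
    using True u(2) by (intro integral_cong) auto
  ultimately show ?thesis using True ab by simp
next
  case False
  hence p1: "1 < p" using p by simp
  define q where "q = p / (p - 1)"
  have q1: "1 < q" and pq: "1 / p + 1 / q = 1" and pq2: "(p - 1) * q = p"
    using p1 by (simp_all add: q_def field_simps)
  define I where "I = integral {a..b} u"
  define J where "J = integral {a..b} (\<lambda>t. u t powr p)"
  define M where "M = (J / (b - a)) powr (1 / p)"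
  have int_u: "u integrable_on {a..b}" by (rule integrable_continuous_interval[OF u(1)])
  have int_up: "(\<lambda>t. u t powr p) integrable_on {a..b}"
    using p1 u by (intro integrable_continuous_interval continuous_on_powr' continuous_intros) auto
  have J0: "0 \<le> J" unfolding J_def by (rule integral_nonneg[OF int_up]) auto
  \<comment> \<open>Integrate Young's inequality for u and c^(p-1), then let c decrease to M.\<close>
  have I_bound: "I \<le> (b - a) * c" if c: "0 < c" "M \<le> c" for c
  proof -
    have "J \<le> (b - a) * c powr p"
    proof -
      have "M powr p \<le> c powr p" using c p1 by (intro powr_mono2) (auto simp: M_def)
      thus ?thesis using J0 ab p1 by (simp add: M_def powr_powr field_simps)
    qed
    have "I * c powr (p - 1) = integral {a..b} (\<lambda>t. u t * c powr (p - 1))" by (simp add: I_def)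
    also have "\<dots> \<le> integral {a..b} (\<lambda>t. u t powr p / p + c powr p / q)"
      using Youngs_inequality[OF p1 q1 pq u(2), of _ "c powr (p - 1)"]
      by (intro integral_le integrable_add integrable_on_divide int_up integrable_on_mult_left int_u
          integrable_const_ivl) (auto simp: powr_powr pq2)
    also have "\<dots> = J / p + (b - a) * c powr p / q"
      using ab by (subst integral_add) (auto intro!: integrable_on_divide int_up simp: J_def)
    also have "\<dots> \<le> (b - a) * c powr p * (1 / p + 1 / q)"
      using divide_right_mono[OF \<open>J \<le> (b - a) * c powr p\<close>, of p] p1 by (simp add: distrib_left)
    also have "\<dots> = ((b - a) * c) * c powr (p - 1)"
      using pq c by (simp add: powr_add[of c "p - 1" 1, simplified])
    finally show ?thesis using c by simp
  qed
  have "I / (b - a) \<le> M"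
  proof (rule field_le_epsilon)
    fix e :: real assume "0 < e"
    moreover have "0 \<le> M" by (simp add: M_def)
    ultimately show "I / (b - a) \<le> M + e"
      using I_bound[of "M + e"] ab by (simp add: pos_divide_le_eq mult.commute)
  qed
  thus ?thesis using ab by (simp add: I_def J_def M_def field_simps)
qed

lemma hp_mean_le_if_norm_le:
  fixes g :: "complex \<Rightarrow> complex"
  assumes g: "continuous_on (ball 0 1) g" and B: "\<And>z. z \<in> ball 0 1 \<Longrightarrow> norm (g z) \<le> B"
    and p: "0 < p" and r: "r \<in> {0<..<1}"
  shows "hp_mean p g r \<le> B"
proof -
  have on_circle: "of_real r * cis t \<in> ball 0 1" for t using r by (simp add: norm_mult)
  have "0 \<le> B" using B[of 0] by (auto intro: order_trans[OF norm_ge_zero])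
  have cont: "continuous_on {0..2*pi} (\<lambda>t. norm (g (of_real r * cis t)) powr p)"
    using p on_circle by (intro continuous_on_powr' continuous_intros continuous_on_compose2[OF g]) auto
  have "integral {0..2*pi} (\<lambda>t. norm (g (of_real r * cis t)) powr p) \<le> integral {0..2*pi} (\<lambda>t. B powr p)"
    using p on_circle by (intro integral_le integrable_continuous_interval[OF cont]) (auto intro!: powr_mono2 B)
  moreover have "0 \<le> integral {0..2*pi} (\<lambda>t. norm (g (of_real r * cis t)) powr p)"
    by (rule integral_nonneg[OF integrable_continuous_interval[OF cont]]) auto
  ultimately have "hp_mean p g r \<le> (B powr p) powr (1 / p)"
    unfolding hp_mean_def using p by (intro powr_mono2) (auto simp: field_simps)
  also have "\<dots> = B" using \<open>0 \<le> B\<close> p by (simp add: powr_powr)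
  finally show ?thesis .
qed

lemma
  fixes g :: "complex \<Rightarrow> complex"
  assumes g: "g holomorphic_on ball 0 1" and B: "\<And>z. z \<in> ball 0 1 \<Longrightarrow> norm (g z) \<le> B" and p: "0 < p"
  shows in_Hp_if_norm_le: "in_Hp p g"
    and Hp_norm_le_if_norm_le: "Hp_norm p g \<le> B"
proof -
  have "hp_mean p g r \<le> B" if "r \<in> {0<..<1}" for r
    using hp_mean_le_if_norm_le[OF holomorphic_on_imp_continuous_on[OF g] B p that] by simp
  thus "in_Hp p g" "Hp_norm p g \<le> B"
    using g unfolding in_Hp_def Hp_norm_def by (auto intro!: bdd_aboveI[of _ B] cSUP_least)
qed

lemma norm_le_Hp_norm_deriv:
  fixes f :: "complex \<Rightarrow> complex"
  assumes f: "f holomorphic_on ball 0 1" and f': "in_Hp p (deriv f)" and p: "1 \<le> p"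
    and z: "z \<in> ball 0 1"
  shows "norm (f z) \<le> norm (f 0) + pi * Hp_norm p (deriv f)"
proof -
  define r where "r = (norm z + 1) / 2"
  have "norm z < 1" using z by simp
  moreover have "0 < norm z + 1" by (simp add: add_nonneg_pos)
  ultimately have r: "0 < r" "r < 1" "norm z < r" unfolding r_def by simp_all
  define u where "u t = norm (deriv f (of_real r * cis t))" for t
  have cont_u: "continuous_on {0..2*pi} u"
    unfolding u_def using r
    by (intro continuous_intros continuous_on_compose2[OF holomorphic_on_imp_continuous_on[OF
          holomorphic_deriv[OF f open_ball]]]) (auto simp: norm_mult)
  have I_nonneg: "0 \<le> integral {0..2*pi} u"
    by (rule integral_nonneg[OF integrable_continuous_interval[OF cont_u]]) (simp add: u_def)
  have "norm (f z - f 0) \<le> r / 2 * integral {0..2*pi} u"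
    unfolding u_def by (rule norm_diff_le_circle_integral_deriv[OF f r])
  also have "\<dots> \<le> pi * (1 / (2*pi - 0) * integral {0..2*pi} u)"
    using r I_nonneg by (simp add: mult_left_le_one_le)
  also have "\<dots> \<le> pi * hp_mean p (deriv f) r"
  proof -
    have "hp_mean p (deriv f) r = (1 / (2*pi - 0) * integral {0..2*pi} (\<lambda>t. u t powr p)) powr (1 / p)"
      by (simp add: hp_mean_def u_def)
    with integral_mean_le_powr_mean[OF _ cont_u _ p] show ?thesis
      by (intro mult_left_mono) (auto simp: u_def)
  qed
  also have "\<dots> \<le> pi * Hp_norm p (deriv f)"
    using f' r unfolding Hp_norm_def in_Hp_def by (simp add: cSUP_upper)
  finally have "norm (f z - f 0) \<le> pi * Hp_norm p (deriv f)" .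
  thus ?thesis using norm_triangle_sub[of "f z" "f 0"] by linarith
qed

lemma
  fixes f :: "complex \<Rightarrow> complex"
  assumes f: "f holomorphic_on ball 0 1" and f': "in_Hp p (deriv f)" and p: "1 \<le> p"
  shows in_Hinf_if_deriv_in_Hp: "in_Hinf f"
    and sup_norm_le_S1_norm: "sup_norm f \<le> pi * S_norm 1 p f"
    and in_Hp_if_deriv_in_Hp: "in_Hp p f"
    and Hp_norm_le_S1_norm: "Hp_norm p f \<le> pi * S_norm 1 p f"
proof -
  have "norm (f 0) \<le> pi * norm (f 0)" using pi_ge_two by (simp add: mult_le_cancel_right1)
  hence bound: "norm (f z) \<le> pi * S_norm 1 p f" if "z \<in> ball 0 1" for z
    using norm_le_Hp_norm_deriv[OF f f' p that] by (simp add: algebra_simps)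
  show "in_Hinf f" unfolding in_Hinf_def bounded_iff using f bound by blast
  show "sup_norm f \<le> pi * S_norm 1 p f" unfolding sup_norm_def using bound by (intro cSUP_least) auto
  show "in_Hp p f" "Hp_norm p f \<le> pi * S_norm 1 p f"
    using in_Hp_if_norm_le[OF f bound] Hp_norm_le_if_norm_le[OF f bound] p by auto
qed

lemma holomorphic_on_funpow_deriv:
  assumes "f holomorphic_on ball 0 1"
  shows "(deriv ^^ k) f holomorphic_on ball 0 1"
  by (induction k) (auto intro: holomorphic_deriv assms)

lemma in_S_Suc_imp_in_S:
  assumes "in_S (Suc k) p f" and "1 \<le> p"
  shows "in_S k p f"
proof -
  have "f holomorphic_on ball 0 1" "in_Hp p (deriv ((deriv ^^ k) f))"
    using assms(1) by (simp_all add: in_S_def)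
  thus ?thesis using in_Hp_if_deriv_in_Hp[OF holomorphic_on_funpow_deriv _ assms(2)] by (simp add: in_S_def)
qed

lemma in_S_mono:
  assumes "in_S m p f" and "k \<le> m" and "1 \<le> p"
  shows "in_S k p f"
  using assms(2,1) by (induction rule: dec_induct) (use in_S_Suc_imp_in_S assms(3) in auto)

lemma S_norm_le_pi_S_norm_Suc:
  assumes "f holomorphic_on ball 0 1" and "in_Hp p ((deriv ^^ Suc k) f)" and p: "1 \<le> p"
  shows "S_norm k p f \<le> pi * S_norm (Suc k) p f"
  using assms(1,2)
proof (induction k arbitrary: f)
  case 0
  thus ?case using Hp_norm_le_S1_norm[OF _ _ p] by simp
next
  case (Suc k)
  have "S_norm k p (deriv f) \<le> pi * S_norm (Suc k) p (deriv f)"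
    using Suc.prems holomorphic_deriv[OF Suc.prems(1) open_ball]
    by (intro Suc.IH) (simp_all add: funpow_Suc_right del: funpow.simps)
  moreover have "norm (f 0) \<le> pi * norm (f 0)" using pi_ge_two by (simp add: mult_le_cancel_right1)
  ultimately show ?case by (simp add: algebra_simps)
qed

theorem proposition3p2:
  fixes n :: nat and p :: real
  assumes "n \<ge> 1" and "1 \<le> p"
  shows "(\<forall>f. in_S n p f \<longrightarrow>
            sup_norm f \<le> pi * S_norm 1 p f \<and>
            (\<forall>k. 1 \<le> k \<and> k < n \<longrightarrow> pi ^ k * S_norm k p f \<le> pi ^ (k + 1) * S_norm (k + 1) p f))
       \<and> (\<forall>k. 1 \<le> k \<and> k < n \<longrightarrow> {f. in_S (k + 1) p f} \<subseteq> {f. in_S k p f})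
       \<and> {f. in_S 1 p f} \<subseteq> {f. in_Hinf f}"
proof (intro conjI allI impI)
  fix f assume f: "in_S n p f"
  show "sup_norm f \<le> pi * S_norm 1 p f"
    using in_S_mono[OF f _ assms(2), of 1] assms(1) sup_norm_le_S1_norm[OF _ _ assms(2)] by (simp add: in_S_def)
  fix k assume k: "1 \<le> k \<and> k < n"
  hence "S_norm k p f \<le> pi * S_norm (Suc k) p f"
    using in_S_mono[OF f _ assms(2), of "Suc k"] S_norm_le_pi_S_norm_Suc[OF _ _ assms(2)]
    by (simp add: in_S_def)
  thus "pi ^ k * S_norm k p f \<le> pi ^ (k + 1) * S_norm (k + 1) p f"
    by (simp add: mult_left_mono mult.assoc)
next
  show "{f. in_S (k + 1) p f} \<subseteq> {f. in_S k p f}" for k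
    using in_S_Suc_imp_in_S assms(2) by auto
  show "{f. in_S 1 p f} \<subseteq> {f. in_Hinf f}"
    using in_Hinf_if_deriv_in_Hp assms(2) by (auto simp: in_S_def)
qed

end
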